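(* For any NOI-graph or COI-graph $G$ on $n$ vertices there exists a vector $\mathbf{v}\in\{-1,1\}^n$ in the kernel of the hybrid Laplacian $\mathcal{L}(G)$.
   Context: A hybrid graph $G=(V,E_L+E_Q)$ has a set $E_L$ of $L$-edges and a set $E_Q$ of $Q$-edges. Its hybrid Laplacian is $\mathcal{L}(G)=L(S_l)+Q(S_q)$ with $S_l=(V,E_L)$, $S_q=(V,E_Q)$, $L=D-A$ the signed Laplacian and $Q=D+A$ the signless Laplacian. $G$ is a NOI-graph if $S_q$ is bipartite and no vertex is incident to both a $Q$-edge and an $L$-edge. $G$ is a COI-graph if $S_q$ is bipartite with a bipartition $(P_1,P_2)$ of $V$ (every $Q$-edge joining $P_1$ to $P_2$) such that every $L$-edge joins two vertices in the same part. *)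

theory Defs
  imports Complex_Main
begin

definition is_edge_set :: "'a set \<Rightarrow> 'a set set \<Rightarrow> bool" where
  "is_edge_set V E \<longleftrightarrow> (\<forall>e\<in>E. \<exists>u w. e = {u, w} \<and> u \<noteq> w \<and> u \<in> V \<and> w \<in> V)"

definition hybrid_graph :: "'a set \<Rightarrow> 'a set set \<Rightarrow> 'a set set \<Rightarrow> bool" where
  "hybrid_graph V EL EQ \<longleftrightarrow> finite V \<and> is_edge_set V EL \<and> is_edge_set V EQ"

definition adj_mat :: "'a set set \<Rightarrow> 'a \<Rightarrow> 'a \<Rightarrow> real" where
  "adj_mat E i j = (if {i, j} \<in> E \<and> i \<noteq> j then 1 else 0)"

definition degree :: "'a set \<Rightarrow> 'a set set \<Rightarrow> 'a \<Rightarrow> nat" where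
  "degree V E i = card {j \<in> V. j \<noteq> i \<and> {i, j} \<in> E}"

definition deg_mat :: "'a set \<Rightarrow> 'a set set \<Rightarrow> 'a \<Rightarrow> 'a \<Rightarrow> real" where
  "deg_mat V E i j = (if i = j then real (degree V E i) else 0)"

definition laplacian :: "'a set \<Rightarrow> 'a set set \<Rightarrow> 'a \<Rightarrow> 'a \<Rightarrow> real" where
  "laplacian V E i j = deg_mat V E i j - adj_mat E i j"

definition signless_laplacian :: "'a set \<Rightarrow> 'a set set \<Rightarrow> 'a \<Rightarrow> 'a \<Rightarrow> real" where
  "signless_laplacian V E i j = deg_mat V E i j + adj_mat E i j"

definition hybrid_laplacian :: "'a set \<Rightarrow> 'a set set \<Rightarrow> 'a set set \<Rightarrow> 'a \<Rightarrow> 'a \<Rightarrow> real" where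
  "hybrid_laplacian V EL EQ i j = laplacian V EL i j + signless_laplacian V EQ i j"

definition bipartition :: "'a set \<Rightarrow> 'a set set \<Rightarrow> 'a set \<Rightarrow> 'a set \<Rightarrow> bool" where
  "bipartition V E P1 P2 \<longleftrightarrow> P1 \<union> P2 = V \<and> P1 \<inter> P2 = {} \<and>
     (\<forall>e\<in>E. \<exists>u\<in>P1. \<exists>w\<in>P2. e = {u, w})"

definition bipartite :: "'a set \<Rightarrow> 'a set set \<Rightarrow> bool" where
  "bipartite V E \<longleftrightarrow> (\<exists>P1 P2. bipartition V E P1 P2)"

definition NOI_graph :: "'a set \<Rightarrow> 'a set set \<Rightarrow> 'a set set \<Rightarrow> bool" where
  "NOI_graph V EL EQ \<longleftrightarrow> hybrid_graph V EL EQ \<and> bipartite V EQ \<and>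
     \<not> (\<exists>x\<in>V. (\<exists>e\<in>EQ. x \<in> e) \<and> (\<exists>f\<in>EL. x \<in> f))"

definition COI_graph :: "'a set \<Rightarrow> 'a set set \<Rightarrow> 'a set set \<Rightarrow> bool" where
  "COI_graph V EL EQ \<longleftrightarrow> hybrid_graph V EL EQ \<and>
     (\<exists>P1 P2. bipartition V EQ P1 P2 \<and> (\<forall>e\<in>EL. e \<subseteq> P1 \<or> e \<subseteq> P2))"

end

theory Submission
  imports Defs
begin

text \<open>Give the vertices of \<open>P\<^sub>1\<close> the value 1 and those of \<open>P\<^sub>2\<close> the value -1. In row i of
  \<open>L = D - A\<close> the degree term cancels against the neighbours as long as all neighbours carry
  the same value as i, which holds for L-edges inside a part; in \<open>Q = D + A\<close> it cancels when
  all neighbours carry the opposite value, which holds for Q-edges across the bipartition.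
  An NOI-graph is a COI-graph once the vertices untouched by Q-edges are moved into \<open>P\<^sub>1\<close>.\<close>

lemma sum_deg_mat_mult:
  assumes "finite V" "i \<in> V"
  shows "(\<Sum>j\<in>V. deg_mat V E i j * v j) = real (degree V E i) * v i"
proof -
  have "(\<Sum>j\<in>V. deg_mat V E i j * v j) = (\<Sum>j\<in>V. if i = j then real (degree V E i) * v j else 0)"
    by (rule sum.cong) (auto simp: deg_mat_def)
  also have "\<dots> = real (degree V E i) * v i"
    using assms by (simp add: sum.delta)
  finally show ?thesis .
qed

lemma sum_adj_mat_mult_const_on_neighbours:
  assumes "finite V" and const: "\<And>j. j \<in> V \<Longrightarrow> j \<noteq> i \<Longrightarrow> {i, j} \<in> E \<Longrightarrow> v j = c"
  shows "(\<Sum>j\<in>V. adj_mat E i j * v j) = real (degree V E i) * c"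
proof -
  have "(\<Sum>j\<in>V. adj_mat E i j * v j) = (\<Sum>j\<in>V. if j \<noteq> i \<and> {i, j} \<in> E then v j else 0)"
    by (rule sum.cong) (auto simp: adj_mat_def)
  also have "\<dots> = (\<Sum>j\<in>{j \<in> V. j \<noteq> i \<and> {i, j} \<in> E}. v j)"
    using assms(1) by (simp add: sum.inter_filter)
  also have "\<dots> = (\<Sum>j\<in>{j \<in> V. j \<noteq> i \<and> {i, j} \<in> E}. c)"
    using const by (intro sum.cong) auto
  also have "\<dots> = real (degree V E i) * c"
    by (simp add: degree_def)
  finally show ?thesis .
qed

lemma laplacian_row_mult_eq_0:
  assumes "finite V" "i \<in> V" "\<And>j. j \<in> V \<Longrightarrow> j \<noteq> i \<Longrightarrow> {i, j} \<in> E \<Longrightarrow> v j = v i"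
  shows "(\<Sum>j\<in>V. laplacian V E i j * v j) = 0"
  using assms sum_deg_mat_mult[OF assms(1,2)] sum_adj_mat_mult_const_on_neighbours[of V i E v "v i"]
  by (simp add: laplacian_def left_diff_distrib sum_subtractf)

lemma signless_laplacian_row_mult_eq_0:
  assumes "finite V" "i \<in> V" "\<And>j. j \<in> V \<Longrightarrow> j \<noteq> i \<Longrightarrow> {i, j} \<in> E \<Longrightarrow> v j = - v i"
  shows "(\<Sum>j\<in>V. signless_laplacian V E i j * v j) = 0"
  using assms sum_deg_mat_mult[OF assms(1,2)] sum_adj_mat_mult_const_on_neighbours[of V i E v "- v i"]
  by (simp add: signless_laplacian_def distrib_right sum.distrib)

lemma hybrid_laplacian_row_mult_eq_0:
  assumes "finite V" "i \<in> V"
    and "\<And>j. j \<in> V \<Longrightarrow> j \<noteq> i \<Longrightarrow> {i, j} \<in> EL \<Longrightarrow> v j = v i"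
    and "\<And>j. j \<in> V \<Longrightarrow> j \<noteq> i \<Longrightarrow> {i, j} \<in> EQ \<Longrightarrow> v j = - v i"
  shows "(\<Sum>j\<in>V. hybrid_laplacian V EL EQ i j * v j) = 0"
  using laplacian_row_mult_eq_0[of V i EL v] signless_laplacian_row_mult_eq_0[of V i EQ v] assms
  by (simp add: hybrid_laplacian_def distrib_right sum.distrib)

lemma bipartition_edge_crosses:
  assumes "bipartition V E P1 P2" "{i, j} \<in> E"
  shows "i \<in> P1 \<longleftrightarrow> j \<notin> P1"
proof -
  obtain u w where "u \<in> P1" "w \<in> P2" "{i, j} = {u, w}"
    using assms unfolding bipartition_def by blast
  moreover have "w \<notin> P1"
    using \<open>w \<in> P2\<close> assms(1) unfolding bipartition_def by blast
  ultimately show ?thesis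
    by (auto simp: doubleton_eq_iff)
qed

lemma COI_graph_if_NOI_graph:
  assumes "NOI_graph V EL EQ"
  shows "COI_graph V EL EQ"
proof -
  from assms obtain P1 P2 where bp: "bipartition V EQ P1 P2" and hg: "hybrid_graph V EL EQ"
    and disjoint: "\<not> (\<exists>x\<in>V. (\<exists>e\<in>EQ. x \<in> e) \<and> (\<exists>f\<in>EL. x \<in> f))"
    unfolding NOI_graph_def bipartite_def by blast
  define Q2 where "Q2 = P2 \<inter> \<Union>EQ"
  have "bipartition V EQ (V - Q2) Q2"
    unfolding bipartition_def
  proof (intro conjI ballI)
    show "(V - Q2) \<union> Q2 = V" "(V - Q2) \<inter> Q2 = {}"
      using bp unfolding bipartition_def Q2_def by auto
  next
    fix e assume "e \<in> EQ"
    then obtain u w where "u \<in> P1" "w \<in> P2" "e = {u, w}"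
      using bp unfolding bipartition_def by blast
    moreover have "u \<in> V - Q2"
      using \<open>u \<in> P1\<close> bp unfolding bipartition_def Q2_def by auto
    moreover have "w \<in> Q2"
      using \<open>e \<in> EQ\<close> calculation unfolding Q2_def by auto
    ultimately show "\<exists>u\<in>V - Q2. \<exists>w\<in>Q2. e = {u, w}"
      by blast
  qed
  moreover have "e \<subseteq> V - Q2" if "e \<in> EL" for e
  proof
    fix x assume "x \<in> e"
    have "e \<subseteq> V"
      using hg that unfolding hybrid_graph_def is_edge_set_def by fastforce
    with \<open>x \<in> e\<close> have "x \<in> V" by blast
    with \<open>x \<in> e\<close> \<open>e \<in> EL\<close> disjoint have "x \<notin> \<Union>EQ" by blast
    with \<open>x \<in> V\<close> show "x \<in> V - Q2"
      unfolding Q2_def by blast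
  qed
  ultimately show ?thesis
    using hg unfolding COI_graph_def by blast
qed

theorem lemmaD2:
  fixes V :: "'a set" and EL EQ :: "'a set set"
  assumes "NOI_graph V EL EQ \<or> COI_graph V EL EQ"
  shows "\<exists>v :: 'a \<Rightarrow> real. (\<forall>x\<in>V. v x \<in> {-1, 1}) \<and>
           (\<forall>i\<in>V. (\<Sum>j\<in>V. hybrid_laplacian V EL EQ i j * v j) = 0)"
proof -
  have "COI_graph V EL EQ"
    using assms COI_graph_if_NOI_graph by blast
  then obtain P1 P2 where bp: "bipartition V EQ P1 P2" and hg: "hybrid_graph V EL EQ"
    and inside: "\<forall>e\<in>EL. e \<subseteq> P1 \<or> e \<subseteq> P2"
    unfolding COI_graph_def by blast
  have "finite V"
    using hg unfolding hybrid_graph_def by blast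
  define v :: "'a \<Rightarrow> real" where "v x = (if x \<in> P1 then 1 else -1)" for x
  have "(\<Sum>j\<in>V. hybrid_laplacian V EL EQ i j * v j) = 0" if "i \<in> V" for i
  proof (rule hybrid_laplacian_row_mult_eq_0[OF \<open>finite V\<close> that])
    fix j assume "{i, j} \<in> EL"
    then have "{i, j} \<subseteq> P1 \<or> {i, j} \<subseteq> P2"
      using inside by blast
    moreover have "P1 \<inter> P2 = {}"
      using bp unfolding bipartition_def by blast
    ultimately have "i \<in> P1 \<longleftrightarrow> j \<in> P1"
      by blast
    then show "v j = v i"
      unfolding v_def by simp
  next
    fix j assume "{i, j} \<in> EQ"
    then have "i \<in> P1 \<longleftrightarrow> j \<notin> P1"
      by (rule bipartition_edge_crosses[OF bp])
    then show "v j = - v i"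
      unfolding v_def by simp
  qed
  moreover have "\<forall>x\<in>V. v x \<in> {-1, 1}"
    by (simp add: v_def)
  ultimately show ?thesis by blast
qed

end
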